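(* Let $p \geq 3$ be a prime and $x, y \in \mathbb{Z}$ with $x^2 - 2 = y^p$ and $y \neq -1$. Then: (1) if $y \not\equiv -1 \pmod p$, then $x \not\equiv \pm 1 \pmod p$; (2) if $y \equiv -1 \pmod p$, then $x \equiv \pm 1 \pmod{p^2}$, and more precisely $v_p((x-1)(x+1)) = v_p(y+1) + 1$.
   Context: $v_p$ denotes the $p$-adic valuation. *)

theory Defs
  imports "HOL-Number_Theory.Number_Theory"
begin

end

theory Submission
  imports Defs
begin

text \<open>Since \<open>(x - 1)(x + 1) = y\<^sup>p + 1\<close> and \<open>y\<^sup>p \<equiv> y (mod p)\<close> by Fermat, \<open>p\<close> divides
  \<open>x\<^sup>2 - 1\<close> exactly when it divides \<open>y + 1\<close>. If it does, write \<open>y = t - 1\<close> with \<open>p | t\<close>;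
  the binomial expansion modulo \<open>t\<^sup>3\<close> gives \<open>y\<^sup>p + 1 = t p (1 + p m)\<close>, so the valuation
  grows by exactly one (lifting the exponent). As an odd prime cannot divide both \<open>x - 1\<close>
  and \<open>x + 1\<close>, the factor \<open>p\<^sup>2\<close> of \<open>x\<^sup>2 - 1\<close> lies entirely in one of them.\<close>

lemma fermat_little_int:
  fixes a :: int
  assumes "prime p"
  shows "[a ^ p = a] (mod int p)"
proof (cases "int p dvd a")
  case True
  then show ?thesis
    using assms dvd_power[of p a] prime_gt_0_nat
    by (simp add: cong_iff_dvd_diff dvd_diff dvd_trans)
next
  case False
  moreover have "prime (int p)"
    using assms by simp
  ultimately have "coprime a (int p)"
    using prime_imp_coprime coprime_commute by blast
  moreover have "residues (int p)"
    using prime_gt_1_nat[OF assms] by (simp add: residues_def)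
  ultimately have "[a ^ (p - 1) = 1] (mod int p)"
    using residues.euler_theorem totient_prime[OF assms] by fastforce
  then have "[a ^ (p - 1) * a = 1 * a] (mod int p)"
    by (rule cong_mult) simp
  moreover have "a ^ (p - 1) * a = a ^ p"
    using assms by (simp add: prime_gt_0_nat power_eq_if)
  ultimately show ?thesis
    by simp
qed

lemma prime_dvd_power_prime_plus_one_iff:
  fixes a :: int
  assumes "prime p"
  shows "int p dvd a ^ p + 1 \<longleftrightarrow> int p dvd a + 1"
proof -
  have "int p dvd a ^ p - a"
    using fermat_little_int[OF assms] by (simp add: cong_iff_dvd_diff)
  moreover have "a ^ p + 1 = (a ^ p - a) + (a + 1)"
    by simp
  ultimately show ?thesis
    by (metis dvd_add_right_iff)
qed

lemma power_minus_one_expansion: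
  fixes t :: int
  shows "\<exists>c. (t - 1) ^ n = (-1) ^ n * (1 - int n * t + int (n choose 2) * t^2) + t^3 * c"
proof (induction n)
  case 0
  show ?case
    by (intro exI[of _ 0]) (simp add: numeral_2_eq_2)
next
  case (Suc n)
  then obtain c
    where c: "(t - 1) ^ n = (-1) ^ n * (1 - int n * t + int (n choose 2) * t^2) + t^3 * c"
    by blast
  have choose: "int (Suc n choose 2) = int (n choose 2) + int n"
    by (simp add: numeral_2_eq_2)
  have "(t - 1) ^ Suc n
      = (t - 1) * ((-1) ^ n * (1 - int n * t + int (n choose 2) * t^2) + t^3 * c)"
    using c by simp
  also have "\<dots> = (-1) ^ Suc n * (1 - int (Suc n) * t + int (Suc n choose 2) * t^2)
      + t^3 * ((t - 1) * c + (-1) ^ n * int (n choose 2))"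
    unfolding choose by (simp add: algebra_simps power2_eq_square power3_eq_cube)
  finally show ?case
    by blast
qed

lemma odd_power_plus_one_factorization:
  fixes a :: int
  assumes "odd n" and "int n dvd a + 1"
  shows "\<exists>m. a ^ n + 1 = (a + 1) * int n * (1 + int n * m)"
proof -
  obtain k where k: "n = 2 * k + 1"
    using assms(1) oddE by blast
  obtain s where s: "a + 1 = int n * s"
    using assms(2) by blast
  obtain c where c: "((a + 1) - 1) ^ n
      = (-1) ^ n * (1 - int n * (a + 1) + int (n choose 2) * (a + 1)^2) + (a + 1)^3 * c"
    using power_minus_one_expansion by blast
  have "n choose 2 = n * k"
    using k by (simp add: choose_two)
  with c have "a ^ n + 1 = (a + 1) * int n * (1 - int k * (a + 1)) + (a + 1)^3 * c"
    using assms(1) by (simp add: algebra_simps power2_eq_square)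
  also have "\<dots> = (a + 1) * int n * (1 + int n * (s * s * c - int k * s))"
    unfolding s by (simp add: algebra_simps power3_eq_cube)
  finally show ?thesis
    by blast
qed

lemma multiplicity_power_odd_prime_plus_one:
  fixes a :: int
  assumes "prime p" and "odd p" and "int p dvd a + 1" and "a \<noteq> -1"
  shows "multiplicity (int p) (a ^ p + 1) = multiplicity (int p) (a + 1) + 1"
proof -
  obtain m where m: "a ^ p + 1 = (a + 1) * int p * (1 + int p * m)"
    using odd_power_plus_one_factorization assms(2,3) by blast
  have prime_p: "prime_elem (int p)"
    using assms(1) by simp
  have "\<not> int p dvd 1 + int p * m"
    using assms(1) by (auto simp: dvd_add_left_iff)
  then have "multiplicity (int p) (1 + int p * m) = 0" and "1 + int p * m \<noteq> 0"
    by (auto intro: not_dvd_imp_multiplicity_0)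
  moreover have "a + 1 \<noteq> 0" and "int p \<noteq> 0"
    using assms(1,4) by auto
  ultimately show ?thesis
    unfolding m using prime_p by (simp add: prime_elem_multiplicity_mult_distrib)
qed

lemma cong_square_one_odd_prime_power:
  fixes x :: int
  assumes "prime p" and "odd p" and "[x^2 = 1] (mod int p ^ n)"
  shows "[x = 1] (mod int p ^ n) \<or> [x = -1] (mod int p ^ n)"
proof -
  have prime_p: "prime (int p)"
    using assms(1) by simp
  have product: "int p ^ n dvd (x - 1) * (x + 1)"
    using assms(3) by (simp add: cong_iff_dvd_diff power2_eq_square algebra_simps)
  have "\<not> (int p dvd x - 1 \<and> int p dvd x + 1)"
  proof
    assume "int p dvd x - 1 \<and> int p dvd x + 1"
    then have "int p dvd (x + 1) - (x - 1)"
      using dvd_diff by blast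
    then have "int p \<le> 2"
      by (intro zdvd_imp_le) simp_all
    then show False
      using assms(1,2) prime_ge_2_nat[of p] by auto
  qed
  then consider "coprime (int p) (x - 1)" | "coprime (int p) (x + 1)"
    using prime_p prime_imp_coprime by blast
  then have "int p ^ n dvd x - 1 \<or> int p ^ n dvd x + 1"
    using product by cases (simp_all add: coprime_dvd_mult_left_iff coprime_dvd_mult_right_iff)
  then show ?thesis
    by (simp add: cong_iff_dvd_diff)
qed

theorem theorem2p3:
  fixes p :: nat and x y :: int
  assumes "prime p" and "p \<ge> 3"
    and "x^2 - 2 = y^p" and "y \<noteq> -1"
  shows "(\<not> [y = -1] (mod int p) \<longrightarrow>
            \<not> [x = 1] (mod int p) \<and> \<not> [x = -1] (mod int p))
       \<and> ([y = -1] (mod int p) \<longrightarrow>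
            ([x = 1] (mod (int p)^2) \<or> [x = -1] (mod (int p)^2)) \<and>
            multiplicity (int p) ((x - 1) * (x + 1)) = multiplicity (int p) (y + 1) + 1)"
proof -
  have odd_p: "odd p"
    using assms(1,2) prime_odd_nat by auto
  have product: "(x - 1) * (x + 1) = y ^ p + 1"
    using assms(3) by (simp add: algebra_simps power2_eq_square)
  have divides_iff: "int p dvd (x - 1) * (x + 1) \<longleftrightarrow> [y = -1] (mod int p)"
    unfolding product prime_dvd_power_prime_plus_one_iff[OF assms(1)]
    by (simp add: cong_iff_dvd_diff)
  show ?thesis
  proof (intro conjI impI)
    assume "\<not> [y = -1] (mod int p)"
    then show "\<not> [x = 1] (mod int p)" and "\<not> [x = -1] (mod int p)"
      using divides_iff by (auto simp: cong_iff_dvd_diff)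
  next
    assume "[y = -1] (mod int p)"
    then have p_dvd: "int p dvd y + 1"
      by (simp add: cong_iff_dvd_diff)
    then show valuation: "multiplicity (int p) ((x - 1) * (x + 1)) = multiplicity (int p) (y + 1) + 1"
      unfolding product using multiplicity_power_odd_prime_plus_one assms(1,4) odd_p by blast
    have "1 \<le> multiplicity (int p) (y + 1)"
      using p_dvd assms(1,4) by (intro multiplicity_geI) auto
    then have "int p ^ 2 dvd (x - 1) * (x + 1)"
      using valuation by (intro multiplicity_dvd') simp
    then have "[x^2 = 1] (mod int p ^ 2)"
      by (simp add: cong_iff_dvd_diff power2_eq_square algebra_simps)
    then show "[x = 1] (mod (int p)^2) \<or> [x = -1] (mod (int p)^2)"
      using cong_square_one_odd_prime_power[OF assms(1) odd_p] by blast
  qed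
qed

end
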